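(* In the setting and for the adaptive regularized Newton method described in the context, suppose conditions (A.2)–(A.3) hold and that $z_k$ satisfies the Armijo condition. Then $\|z_k-x_k\|\le\frac{2\kappa_g}{\sigma_k-\kappa_H}$ whenever $\sigma_k>\kappa_H$.
   Context: Setting: $\mathcal E$ is a finite-dimensional real Euclidean space with inner product $\langle\cdot,\cdot\rangle$, norm $\|\cdot\|$; $\mathcal M\subset\mathcal E$ is a smooth embedded Riemannian submanifold of dimension $n$ with tangent spaces $\mathcal T_x\mathcal M$, tangent bundle $\mathcal T\mathcal M$, Riemannian metric $\langle\cdot,\cdot\rangle_x$ and norm $\|\cdot\|_x$. $f$ is a smooth real function on an open set of $\mathcal E$ containing $\mathrm{conv}(\mathcal M)$, with Euclidean gradient/Hessian $\nabla f,\nabla^2 f$ and Riemannian gradient/Hessian $\mathrm{grad}\, f,\mathrm{Hess}\, f$ of $f|_{\mathcal M}$. $R:\mathcal T\mathcal M\to\mathcal M$ is a smooth retraction ($R_x(0_x)=x$, $DR_x(0_x)=\mathrm{id}$). Adaptive regularized Newton method: fix $x_0\in\mathcal M$, $\sigma_0>0$, $0<\eta_1\le\eta_2<1$, $0<\gamma_0<1<\gamma_1\le\gamma_2$, $\rho,\delta\in(0,1)$, $\alpha_0\in(0,1]$, $T>0$, $\theta>1$, $\epsilon\ge0$, and symmetric linear operators $H_k$ on $\mathcal E$. At iteration $k$ let $m_k(x)=\langle\nabla f(x_k),x-x_k\rangle+\frac12\langle H_k(x-x_k),x-x_k\rangle+\frac{\sigma_k}2\|x-x_k\|^2$, $g:=\mathrm{grad}\,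 m_k(x_k)$ ($=\mathrm{grad}\, f(x_k)$) and $\mathcal H:=\mathrm{Hess}\, m_k(x_k)$ (Riemannian gradient and Hessian of $m_k|_{\mathcal M}$ at $x_k$). Modified CG (inner products/norms in $\langle\cdot,\cdot\rangle_{x_k}$): $\eta_0=0$, $r_0=g$, $p_0=-r_0$, $i=0$; while $i\le n-1$: $\pi_i=\langle p_i,\mathcal Hp_i\rangle$; if $\pi_i/\|p_i\|^2\le\epsilon$ then (if $i=0$: $s_k=p_0$, $d_k=0$; else $s_k=\eta_i$ and $d_k=p_i$ if $\pi_i/\|p_i\|^2\le-\epsilon$, $d_k=0$ otherwise) and stop; else $\alpha_i=\|r_i\|^2/\pi_i$, $\eta_{i+1}=\eta_i+\alpha_ip_i$, $r_{i+1}=r_i+\alpha_i\mathcal Hp_i$; if $\|r_{i+1}\|\le\min\{\|r_0\|^\theta,T\}$ then $s_k=\eta_{i+1}$, $d_k=0$ and stop; else $\beta_{i+1}=\|r_{i+1}\|^2/\|r_i\|^2$, $p_{i+1}=-r_{i+1}+\beta_{i+1}p_i$, $i\leftarrow i+1$. Then $\xi_k=s_k+\tau_kd_k$ with $\tau_k=\langle d_k,g\rangle/\langle d_k,\mathcal Hd_k\rangle$ if $d_k\ne0$, $\xi_k=s_k$ if $d_k=0$. Trial point: $\alpha_k=\alpha_0\delta^h$, $h$ the smallest nonnegative integer with $m_k(R_{x_k}(\alpha_0\delta^h\xi_k))\le\rho\alpha_0\delta^h\langle g,\xi_k\rangle_{x_k}$ (Armijo condition); $z_k=R_{x_k}(\alpha_k\xi_k)$;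 $\rho_k=(f(z_k)-f(x_k))/m_k(z_k)$; $x_{k+1}=z_k$ if $\rho_k\ge\eta_1$, else $x_{k+1}=x_k$; $\sigma_{k+1}\in(0,\gamma_0\sigma_k]$ if $\rho_k\ge\eta_2$, $\in[\gamma_0\sigma_k,\gamma_1\sigma_k]$ if $\eta_1\le\rho_k<\eta_2$, $\in[\gamma_1\sigma_k,\gamma_2\sigma_k]$ otherwise; the method stops if $\mathrm{grad}\, f(x_k)=0$. Conditions: (A.2) there is $\kappa_g>0$ with $\|\nabla f(x_k)\|\le\kappa_g$ for all $k$; (A.3) there is $\kappa_H>0$ with $\|H_k\|\le\kappa_H$ for all $k$. *)

theory Defs
  imports "HOL-Analysis.Analysis"
begin

definition tangent_space :: "'a::euclidean_space set \<Rightarrow> 'a \<Rightarrow> 'a set" where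
  "tangent_space M y = {v. \<exists>\<gamma> e. e > 0 \<and> \<gamma> 0 = y \<and> (\<forall>t\<in>{-e<..<e}. \<gamma> t \<in> M)
                          \<and> (\<gamma> has_vector_derivative v) (at 0)}"

text \<open>For a Riemannian submanifold (induced metric) the Riemannian gradient is the
  projection of the Euclidean gradient onto the tangent space.\<close>
definition tproj :: "'a::euclidean_space set \<Rightarrow> 'a \<Rightarrow> 'a" where
  "tproj V v = (THE u. u \<in> V \<and> (\<forall>w\<in>V. (v - u) \<bullet> w = 0))"

definition model :: "'a::euclidean_space \<Rightarrow> ('a \<Rightarrow> 'a) \<Rightarrow> real \<Rightarrow> 'a \<Rightarrow> 'a \<Rightarrow> real" where
  "model gE Hk sig xk y =
     gE \<bullet> (y - xk) + 1/2 * (Hk (y - xk) \<bullet> (y - xk)) + sig / 2 * (norm (y - xk))^2"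

text \<open>The iterates p_i, r_i, eta_i are given as sequences; the algorithm is deterministic,
  so this relational description determines (s, d).\<close>
definition mcg :: "'a::euclidean_space \<Rightarrow> ('a \<Rightarrow> 'a) \<Rightarrow> real \<Rightarrow> real \<Rightarrow> real \<Rightarrow> nat
                    \<Rightarrow> 'a \<Rightarrow> 'a \<Rightarrow> bool" where
  "mcg g Hs eps theta Tc n s d \<longleftrightarrow>
    (\<exists>m p r eta.
       m < n \<and> eta 0 = 0 \<and> r 0 = g \<and> p 0 = - g \<and>
       (\<forall>i<m.
          (p i \<bullet> Hs (p i)) / (norm (p i))^2 > eps \<and>
          eta (Suc i) = eta i + ((norm (r i))^2 / (p i \<bullet> Hs (p i))) *\<^sub>R p i \<and>
          r (Suc i) = r i + ((norm (r i))^2 / (p i \<bullet> Hs (p i))) *\<^sub>R Hs (p i) \<and>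
          \<not> (norm (r (Suc i)) \<le> min (norm (r 0) powr theta) Tc) \<and>
          p (Suc i) = - r (Suc i) + ((norm (r (Suc i)))^2 / (norm (r i))^2) *\<^sub>R p i) \<and>
       ( ((p m \<bullet> Hs (p m)) / (norm (p m))^2 \<le> eps \<and>
           (if m = 0 then s = p 0 \<and> d = 0
            else s = eta m \<and>
                 d = (if (p m \<bullet> Hs (p m)) / (norm (p m))^2 \<le> - eps then p m else 0)))
       \<or> ((p m \<bullet> Hs (p m)) / (norm (p m))^2 > eps \<and>
           norm (r m + ((norm (r m))^2 / (p m \<bullet> Hs (p m))) *\<^sub>R Hs (p m))
              \<le> min (norm (r 0) powr theta) Tc \<and>
           s = eta m + ((norm (r m))^2 / (p m \<bullet> Hs (p m))) *\<^sub>R p m \<and>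
           d = 0)))"

definition search_dir :: "'a::euclidean_space \<Rightarrow> ('a \<Rightarrow> 'a) \<Rightarrow> 'a \<Rightarrow> 'a \<Rightarrow> 'a" where
  "search_dir g Hs s d =
     (if d \<noteq> 0 then s + ((d \<bullet> g) / (d \<bullet> Hs d)) *\<^sub>R d else s)"

end

(*
  Armijo's condition bounds m_k(z_k) by a nonnegative multiple of <g, xi_k>, and xi_k is a
  descent direction: the CG iterates eta_i are nonnegative combinations of the directions p_i,
  for which the classical orthogonality of residuals gives <g, p_i> = -|r_i|^2, while the
  negative-curvature correction tau_k d_k contributes <d_k, g>^2 / <d_k, Hess d_k> <= 0.
  Hence m_k(z_k) <= 0, and since m_k(z) >= -kappa_g |z - x_k| + (sigma_k - kappa_H)/2 |z - x_k|^2
  the bound follows.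
*)

theory Submission
  imports Defs
begin

locale cg_run =
  fixes V :: "'a::euclidean_space set" and Hs :: "'a \<Rightarrow> 'a"
    and p r :: "nat \<Rightarrow> 'a" and m :: nat
  assumes subspace_V: "subspace V"
    and Hs_maps: "\<And>u. u \<in> V \<Longrightarrow> Hs u \<in> V"
    and Hs_sym: "\<And>u v. u \<in> V \<Longrightarrow> v \<in> V \<Longrightarrow> Hs u \<bullet> v = u \<bullet> Hs v"
    and r0_in: "r 0 \<in> V" and p0: "p 0 = - r 0"
    and curvature_nonzero: "\<And>i. i < m \<Longrightarrow> p i \<bullet> Hs (p i) \<noteq> 0"
    and residual_nonzero: "\<And>i. i < m \<Longrightarrow> r i \<noteq> 0"
    and residual_step: "\<And>i. i < m \<Longrightarrow>
          r (Suc i) = r i + ((norm (r i))\<^sup>2 / (p i \<bullet> Hs (p i))) *\<^sub>R Hs (p i)"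
    and direction_step: "\<And>i. i < m \<Longrightarrow>
          p (Suc i) = - r (Suc i) + ((norm (r (Suc i)))\<^sup>2 / (norm (r i))\<^sup>2) *\<^sub>R p i"
begin

abbreviation step_size :: "nat \<Rightarrow> real" where
  "step_size i \<equiv> (norm (r i))\<^sup>2 / (p i \<bullet> Hs (p i))"

lemma step_size_nonzero: "i < m \<Longrightarrow> step_size i \<noteq> 0"
  using curvature_nonzero residual_nonzero by simp

lemma iterates_in_subspace: "i \<le> m \<Longrightarrow> r i \<in> V \<and> p i \<in> V"
proof (induction i)
  case 0
  show ?case using r0_in p0 subspace_V by (simp add: subspace_neg)
next
  case (Suc i)
  then have "r i \<in> V" "p i \<in> V" "i < m" by auto
  then have "r (Suc i) \<in> V"
    using residual_step Hs_maps subspace_V by (simp add: subspace_add subspace_scale)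
  with \<open>p i \<in> V\<close> \<open>i < m\<close> show ?case
    using direction_step subspace_V by (simp add: subspace_diff subspace_scale)
qed

lemma inner_residual_step:
  "i < m \<Longrightarrow> step_size i * (w \<bullet> Hs (p i)) = w \<bullet> r (Suc i) - w \<bullet> r i"
  by (simp add: residual_step inner_add_right)

lemma inner_residual_of_inner_directions:
  assumes "l \<le> m" and "\<And>j. j \<le> l \<Longrightarrow> w \<bullet> p j = 0"
  shows "w \<bullet> r l = 0"
proof (cases l)
  case 0
  then show ?thesis using assms(2)[of 0] p0 by simp
next
  case (Suc l')
  then have "w \<bullet> p l = - (w \<bullet> r l) + ((norm (r l))\<^sup>2 / (norm (r l'))\<^sup>2) * (w \<bullet> p l')"
    using direction_step[of l'] assms(1) by (simp add: inner_diff_right)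
  then show ?thesis using assms(2)[of l] assms(2)[of l'] Suc by simp
qed

lemma residual_inner_direction:
  assumes "i \<le> m" and orth: "\<And>j. j < i \<Longrightarrow> r i \<bullet> p j = 0"
  shows "r i \<bullet> p i = - (norm (r i))\<^sup>2"
proof (cases i)
  case 0
  then show ?thesis using p0 by (simp add: power2_norm_eq_inner)
next
  case (Suc i')
  then show ?thesis using direction_step[of i'] orth[of i'] assms(1)
    by (simp add: inner_diff_right power2_norm_eq_inner)
qed

lemma residual_orthogonal_directions_step:
  assumes i: "i < m" and orth: "\<And>j. j < i \<Longrightarrow> r i \<bullet> p j = 0"
    and conj: "\<And>j. j < i \<Longrightarrow> p i \<bullet> Hs (p j) = 0" and j: "j \<le> i"
  shows "r (Suc i) \<bullet> p j = 0"
proof -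
  have "r (Suc i) \<bullet> p j = r i \<bullet> p j + step_size i * (Hs (p i) \<bullet> p j)"
    using i by (simp add: residual_step inner_add_left)
  moreover have "Hs (p i) \<bullet> p j = p i \<bullet> Hs (p j)"
    using Hs_sym iterates_in_subspace i j by simp
  moreover have "r i \<bullet> p i = - (norm (r i))\<^sup>2"
    using residual_inner_direction i orth by simp
  ultimately show ?thesis
    using orth conj j curvature_nonzero[OF i] by (cases "j = i") auto
qed

lemma direction_conjugate_step:
  assumes i: "i < m" and conj: "\<And>j. j < i \<Longrightarrow> p i \<bullet> Hs (p j) = 0"
    and orth: "\<And>l. l \<le> i \<Longrightarrow> r (Suc i) \<bullet> r l = 0" and j: "j \<le> i"
  shows "p (Suc i) \<bullet> Hs (p j) = 0"
proof -
  have expand: "p (Suc i) \<bullet> Hs (p j) = - (r (Suc i) \<bullet> Hs (p j))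
      + ((norm (r (Suc i)))\<^sup>2 / (norm (r i))\<^sup>2) * (p i \<bullet> Hs (p j))"
    using i by (simp add: direction_step inner_diff_left)
  have step: "step_size j * (r (Suc i) \<bullet> Hs (p j)) = r (Suc i) \<bullet> r (Suc j) - r (Suc i) \<bullet> r j"
    using inner_residual_step i j by simp
  show ?thesis
  proof (cases "j = i")
    case True
    with step orth[of i] have "step_size i * (r (Suc i) \<bullet> Hs (p i)) = (norm (r (Suc i)))\<^sup>2"
      by (simp add: power2_norm_eq_inner)
    then show ?thesis
      using expand True curvature_nonzero[OF i] residual_nonzero[OF i]
      by (simp add: field_simps)
  next
    case False
    with j have "j < i" by simp
    with step orth[of j] orth[of "Suc j"] have "r (Suc i) \<bullet> Hs (p j) = 0"
      using step_size_nonzero i by simp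
    then show ?thesis using expand conj \<open>j < i\<close> by simp
  qed
qed

lemma cg_orthogonality:
  "i \<le> m \<Longrightarrow> (\<forall>j<i. r i \<bullet> p j = 0) \<and> (\<forall>j<i. p i \<bullet> Hs (p j) = 0)"
proof (induction i)
  case 0
  show ?case by simp
next
  case (Suc i)
  then have i: "i < m" and orth: "\<And>j. j < i \<Longrightarrow> r i \<bullet> p j = 0"
    and conj: "\<And>j. j < i \<Longrightarrow> p i \<bullet> Hs (p j) = 0" by auto
  have orth': "r (Suc i) \<bullet> p j = 0" if "j \<le> i" for j
    using residual_orthogonal_directions_step[OF i orth conj that] .
  have "r (Suc i) \<bullet> r l = 0" if "l \<le> i" for l
    using inner_residual_of_inner_directions[of l] orth' that i by simp
  then have "p (Suc i) \<bullet> Hs (p j) = 0" if "j \<le> i" for j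
    using direction_conjugate_step[OF i conj _ that] by blast
  with orth' show ?case by (simp add: less_Suc_eq_le)
qed

lemma initial_residual_inner_direction:
  "i \<le> m \<Longrightarrow> r 0 \<bullet> p i = - (norm (r i))\<^sup>2"
proof (induction i)
  case 0
  show ?case using p0 by (simp add: power2_norm_eq_inner)
next
  case (Suc i)
  then have i: "i < m" by simp
  have "r (Suc i) \<bullet> r 0 = 0"
    using inner_residual_of_inner_directions[of 0 "r (Suc i)"] cg_orthogonality[of "Suc i"] i
    by simp
  then have "r 0 \<bullet> p (Suc i) = ((norm (r (Suc i)))\<^sup>2 / (norm (r i))\<^sup>2) * (r 0 \<bullet> p i)"
    using i by (simp add: direction_step inner_diff_right inner_commute)
  then show ?case using Suc.IH i residual_nonzero[OF i] by simp
qed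

lemma initial_residual_inner_step_nonpos:
  assumes "i \<le> m" and "p i \<bullet> Hs (p i) > 0"
  shows "r 0 \<bullet> (step_size i *\<^sub>R p i) \<le> 0"
  using initial_residual_inner_direction[OF assms(1)] assms(2)
  by (simp add: mult_nonneg_nonpos)

lemma initial_residual_inner_iterate_nonpos:
  assumes "eta 0 = 0" and "\<And>i. i < m \<Longrightarrow> eta (Suc i) = eta i + step_size i *\<^sub>R p i"
    and "\<And>i. i < m \<Longrightarrow> p i \<bullet> Hs (p i) > 0"
  shows "i \<le> m \<Longrightarrow> r 0 \<bullet> eta i \<le> 0"
proof (induction i)
  case 0
  show ?case using assms(1) by simp
next
  case (Suc i)
  then have "i < m" by simp
  then show ?case
    using Suc.IH assms(2,3) initial_residual_inner_step_nonpos[of i]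
    by (simp add: inner_add_right)
qed

end

lemma search_dir_descent:
  assumes "g \<bullet> s \<le> 0" and "d \<noteq> 0 \<Longrightarrow> d \<bullet> Hs d \<le> 0"
  shows "g \<bullet> search_dir g Hs s d \<le> 0"
proof (cases "d = 0")
  case True
  then show ?thesis using assms(1) by (simp add: search_dir_def)
next
  case False
  then have "g \<bullet> search_dir g Hs s d = g \<bullet> s + (d \<bullet> g)\<^sup>2 / (d \<bullet> Hs d)"
    by (simp add: search_dir_def inner_add_right inner_commute power2_eq_square)
  moreover have "(d \<bullet> g)\<^sup>2 / (d \<bullet> Hs d) \<le> 0"
    using assms(2) False by (simp add: divide_nonneg_nonpos)
  ultimately show ?thesis using assms(1) by simp
qed

lemma mcg_descent:
  fixes g :: "'a::euclidean_space"
  assumes V: "subspace V" and g: "g \<in> V"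
    and Hs_maps: "\<And>u. u \<in> V \<Longrightarrow> Hs u \<in> V"
    and Hs_sym: "\<And>u v. u \<in> V \<Longrightarrow> v \<in> V \<Longrightarrow> Hs u \<bullet> v = u \<bullet> Hs v"
    and eps: "0 \<le> eps" and Tc: "0 \<le> Tc"
    and cg: "mcg g Hs eps theta Tc n s d"
  shows "g \<bullet> s \<le> 0" and "d \<noteq> 0 \<Longrightarrow> d \<bullet> Hs d \<le> 0"
proof -
  from cg obtain m p r eta where eta0: "eta 0 = 0" and r0: "r 0 = g" and p0: "p 0 = - g"
    and loop: "\<forall>i<m.
          (p i \<bullet> Hs (p i)) / (norm (p i))\<^sup>2 > eps \<and>
          eta (Suc i) = eta i + ((norm (r i))\<^sup>2 / (p i \<bullet> Hs (p i))) *\<^sub>R p i \<and>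
          r (Suc i) = r i + ((norm (r i))\<^sup>2 / (p i \<bullet> Hs (p i))) *\<^sub>R Hs (p i) \<and>
          \<not> (norm (r (Suc i)) \<le> min (norm (r 0) powr theta) Tc) \<and>
          p (Suc i) = - r (Suc i) + ((norm (r (Suc i)))\<^sup>2 / (norm (r i))\<^sup>2) *\<^sub>R p i"
    and stop: "( ((p m \<bullet> Hs (p m)) / (norm (p m))\<^sup>2 \<le> eps \<and>
           (if m = 0 then s = p 0 \<and> d = 0
            else s = eta m \<and>
                 d = (if (p m \<bullet> Hs (p m)) / (norm (p m))\<^sup>2 \<le> - eps then p m else 0)))
       \<or> ((p m \<bullet> Hs (p m)) / (norm (p m))\<^sup>2 > eps \<and>
           s = eta m + ((norm (r m))\<^sup>2 / (p m \<bullet> Hs (p m))) *\<^sub>R p m \<and>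
           d = 0))"
    unfolding mcg_def by blast
  have curvature_pos: "p i \<bullet> Hs (p i) > 0" if "(p i \<bullet> Hs (p i)) / (norm (p i))\<^sup>2 > eps" for i
  proof -
    have "(p i \<bullet> Hs (p i)) / (norm (p i))\<^sup>2 > 0" using that eps by linarith
    then show ?thesis by (simp add: zero_less_divide_iff)
  qed
  have residual_nonzero: "r i \<noteq> 0" if "i < m" for i
  proof (cases i)
    case 0
    then show ?thesis using curvature_pos loop that r0 p0 by fastforce
  next
    case (Suc j)
    with that have "j < m" by simp
    with loop have "\<not> norm (r (Suc j)) \<le> min (norm (r 0) powr theta) Tc" by blast
    then show ?thesis using Tc Suc by auto
  qed
  interpret cg_run V Hs p r m
    using V g Hs_maps Hs_sym r0 p0 loop curvature_pos residual_nonzero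
    by unfold_locales (auto simp: less_imp_neq[symmetric])
  have iterate: "g \<bullet> eta m \<le> 0"
    using initial_residual_inner_iterate_nonpos[of eta m] eta0 loop curvature_pos r0 by auto
  show "g \<bullet> s \<le> 0"
  proof (cases "(p m \<bullet> Hs (p m)) / (norm (p m))\<^sup>2 \<le> eps")
    case True
    then show ?thesis using stop iterate p0 r0 by (auto split: if_splits)
  next
    case False
    then show ?thesis using stop iterate initial_residual_inner_step_nonpos[of m] curvature_pos r0
      by (auto simp: inner_add_right)
  qed
  show "d \<bullet> Hs d \<le> 0" if "d \<noteq> 0"
  proof -
    from stop that have "(p m \<bullet> Hs (p m)) / (norm (p m))\<^sup>2 \<le> - eps" and "d = p m"
      by (auto split: if_splits)
    moreover from this have "(p m \<bullet> Hs (p m)) / (norm (p m))\<^sup>2 \<le> 0" using eps by linarith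
    ultimately show ?thesis using that by (simp add: divide_le_0_iff)
  qed
qed


lemma tproj_in_subspace:
  fixes V :: "'a::euclidean_space set"
  assumes V: "subspace V"
  shows "tproj V v \<in> V"
proof -
  have "span V = V" using V by (simp add: span_eq_iff)
  then obtain y z where y: "y \<in> V" and z: "\<And>w. w \<in> V \<Longrightarrow> z \<bullet> w = 0" and v: "v = y + z"
    using orthogonal_subspace_decomp_exists[of V v] by (metis orthogonal_def)
  have "tproj V v = y"
    unfolding tproj_def
  proof (rule the_equality)
    show "y \<in> V \<and> (\<forall>w\<in>V. (v - y) \<bullet> w = 0)" using y z v by simp
  next
    fix u assume u: "u \<in> V \<and> (\<forall>w\<in>V. (v - u) \<bullet> w = 0)"
    then have "u - y \<in> V" using y V by (simp add: subspace_diff)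
    then have "(v - y) \<bullet> (u - y) - (v - u) \<bullet> (u - y) = 0" using u z v by simp
    then have "(u - y) \<bullet> (u - y) = 0" by (simp add: algebra_simps inner_diff_left)
    then show "u = y" by simp
  qed
  with y show ?thesis by simp
qed

lemma model_lower_bound:
  fixes gE :: "'a::euclidean_space"
  assumes "linear Hk" and "onorm Hk \<le> kH" and "norm gE \<le> kg"
  shows "model gE Hk sig xk z \<ge> - kg * norm (z - xk) + (sig - kH) / 2 * (norm (z - xk))\<^sup>2"
proof -
  define y where "y = z - xk"
  have "gE \<bullet> y \<ge> - (kg * norm y)"
  proof -
    have "\<bar>gE \<bullet> y\<bar> \<le> norm gE * norm y" by (rule Cauchy_Schwarz_ineq2)
    also have "\<dots> \<le> kg * norm y" using assms(3) by (simp add: mult_right_mono)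
    finally show ?thesis by linarith
  qed
  moreover have "Hk y \<bullet> y \<ge> - (kH * (norm y)\<^sup>2)"
  proof -
    have "\<bar>Hk y \<bullet> y\<bar> \<le> norm (Hk y) * norm y" by (rule Cauchy_Schwarz_ineq2)
    also have "\<dots> \<le> (onorm Hk * norm y) * norm y"
      using onorm[of Hk y] assms(1) by (simp add: linear_conv_bounded_linear mult_right_mono)
    also have "\<dots> \<le> (kH * norm y) * norm y" using assms(2) by (simp add: mult_right_mono)
    finally show ?thesis by (simp add: power2_eq_square)
  qed
  moreover have "model gE Hk sig xk z = gE \<bullet> y + 1/2 * (Hk y \<bullet> y) + sig / 2 * (norm y)\<^sup>2"
    by (simp add: model_def y_def)
  moreover have "(sig - kH) / 2 * (norm y)\<^sup>2 = sig / 2 * (norm y)\<^sup>2 - 1/2 * (kH * (norm y)\<^sup>2)"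
    by (simp add: field_simps)
  ultimately show ?thesis unfolding y_def by linarith
qed

lemma le_of_quadratic_nonpos:
  fixes N b c :: real
  assumes "0 \<le> N" and "0 < c" and "0 \<le> b" and "- b * N + c / 2 * N\<^sup>2 \<le> 0"
  shows "N \<le> 2 * b / c"
proof (cases "N = 0")
  case True
  then show ?thesis using assms(2,3) by simp
next
  case False
  with assms(1,4) have "c / 2 * N \<le> b"
    by (simp add: power2_eq_square algebra_simps mult_le_cancel_left_pos)
  then show ?thesis using assms(2) by (simp add: field_simps)
qed

lemma norm_le_of_model_nonpos:
  fixes gE :: "'a::euclidean_space"
  assumes "linear Hk" and "onorm Hk \<le> kH" and "norm gE \<le> kg"
    and "sig > kH" and "model gE Hk sig xk z \<le> 0"
  shows "norm (z - xk) \<le> 2 * kg / (sig - kH)"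
proof (rule le_of_quadratic_nonpos)
  show "0 \<le> kg" using assms(3) norm_ge_zero order_trans by blast
  show "- kg * norm (z - xk) + (sig - kH) / 2 * (norm (z - xk))\<^sup>2 \<le> 0"
    using model_lower_bound[OF assms(1-3), where sig = sig and xk = xk and z = z] assms(5)
    by linarith
qed (use assms(4) in auto)

theorem lemma4p7:
  fixes M :: "'a::euclidean_space set" and n :: nat
    and f :: "'a \<Rightarrow> real" and gradf :: "'a \<Rightarrow> 'a" and U :: "'a set"
    and R :: "'a \<Rightarrow> 'a \<Rightarrow> 'a"
    and x :: "nat \<Rightarrow> 'a" and H :: "nat \<Rightarrow> 'a \<Rightarrow> 'a" and \<sigma> :: "nat \<Rightarrow> real"
    and k :: nat and Hess :: "'a \<Rightarrow> 'a" and s d :: 'a and h :: nat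
    and \<rho> \<delta> \<alpha>0 Tc \<theta> \<epsilon> \<kappa>g \<kappa>H :: real
  assumes manifold: "\<forall>y\<in>M. subspace (tangent_space M y) \<and> dim (tangent_space M y) = n"
    and U_open: "open U" and U_conv: "convex hull M \<subseteq> U"
    and f_grad: "\<forall>y\<in>U. (f has_derivative (\<lambda>v. gradf y \<bullet> v)) (at y)"
    and R_in: "\<forall>y\<in>M. \<forall>v\<in>tangent_space M y. R y v \<in> M"
    and R_zero: "\<forall>y\<in>M. R y 0 = y"
    and R_deriv: "\<forall>y\<in>M. (R y has_derivative id) (at 0 within tangent_space M y)"
    and x_in: "\<forall>j. x j \<in> M"
    and \<sigma>_pos: "\<forall>j. \<sigma> j > 0"
    and H_sym: "\<forall>j. linear (H j) \<and> (\<forall>u v. H j u \<bullet> v = u \<bullet> H j v)"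
    and params: "0 < \<rho>" "\<rho> < 1" "0 < \<delta>" "\<delta> < 1" "0 < \<alpha>0" "\<alpha>0 \<le> 1"
                "Tc > 0" "\<theta> > 1" "\<epsilon> \<ge> 0"
    and Hess_maps: "\<forall>u\<in>tangent_space M (x k). Hess u \<in> tangent_space M (x k)"
    and Hess_lin: "\<forall>u\<in>tangent_space M (x k). \<forall>v\<in>tangent_space M (x k). \<forall>a b.
                     Hess (a *\<^sub>R u + b *\<^sub>R v) = a *\<^sub>R Hess u + b *\<^sub>R Hess v"
    and Hess_sym: "\<forall>u\<in>tangent_space M (x k). \<forall>v\<in>tangent_space M (x k).
                     Hess u \<bullet> v = u \<bullet> Hess v"
    and CG: "mcg (tproj (tangent_space M (x k)) (gradf (x k))) Hess \<epsilon> \<theta> Tc n s d"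
    and A2: "\<forall>j. norm (gradf (x j)) \<le> \<kappa>g"
    and A3: "\<forall>j. onorm (H j) \<le> \<kappa>H"
    and Armijo:
      "model (gradf (x k)) (H k) (\<sigma> k) (x k)
          (R (x k) ((\<alpha>0 * \<delta> ^ h) *\<^sub>R
             search_dir (tproj (tangent_space M (x k)) (gradf (x k))) Hess s d))
        \<le> \<rho> * (\<alpha>0 * \<delta> ^ h) *
           (tproj (tangent_space M (x k)) (gradf (x k)) \<bullet>
              search_dir (tproj (tangent_space M (x k)) (gradf (x k))) Hess s d)"
  shows "\<sigma> k > \<kappa>H \<Longrightarrow>
    norm (R (x k) ((\<alpha>0 * \<delta> ^ h) *\<^sub>R
             search_dir (tproj (tangent_space M (x k)) (gradf (x k))) Hess s d) - x k)
      \<le> 2 * \<kappa>g / (\<sigma> k - \<kappa>H)"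
proof -
  assume \<sigma>k: "\<sigma> k > \<kappa>H"
  define V where "V = tangent_space M (x k)"
  define g where "g = tproj V (gradf (x k))"
  have V: "subspace V" using manifold x_in by (simp add: V_def)
  have g: "g \<in> V" unfolding g_def using V by (rule tproj_in_subspace)
  have Hess_V: "\<And>u. u \<in> V \<Longrightarrow> Hess u \<in> V"
    and Hess_V_sym: "\<And>u v. u \<in> V \<Longrightarrow> v \<in> V \<Longrightarrow> Hess u \<bullet> v = u \<bullet> Hess v"
    using Hess_maps Hess_sym by (auto simp: V_def)
  have cg: "mcg g Hess \<epsilon> \<theta> Tc n s d" using CG by (simp add: g_def V_def)
  have "g \<bullet> search_dir g Hess s d \<le> 0"
    using mcg_descent[OF V g Hess_V Hess_V_sym params(9) less_imp_le[OF params(7)] cg]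
    by (rule search_dir_descent)
  moreover have "0 \<le> \<rho> * (\<alpha>0 * \<delta> ^ h)" using params by simp
  ultimately have "model (gradf (x k)) (H k) (\<sigma> k) (x k)
          (R (x k) ((\<alpha>0 * \<delta> ^ h) *\<^sub>R search_dir g Hess s d)) \<le> 0"
    using Armijo mult_nonneg_nonpos unfolding g_def V_def by fastforce
  then show ?thesis
    using norm_le_of_model_nonpos \<sigma>k H_sym A2 A3 unfolding g_def V_def by blast
qed

end
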